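(* Let $X$ be a compactum, $Y$ a compactum in the Hilbert cube $I^\infty$, and $Y_1\supset Y_2\supset\cdots$ compact prism neighbourhoods of $Y$ with $\bigcap_kY_k=Y$ and inclusions $p_k:Y_{k+1}\to Y_k$. Let $T_{X,Y}$ be the rooted simplicial tree of the inverse sequence of sets $([X,Y_k],p_k^* )_{k\ge1}$, where $p_k^*[g]=[p_k\circ g]$. Then there is a bijection between the homotopy classes of approximative maps from $X$ towards $Y$ and the geodesically complete branches of $T_{X,Y}$.
   Context: A compactum is a compact metric space; a prism is a space homeomorphic to $P\times I^\infty$ with $P$ a compact polyhedron. $[X,Y_k]$ is the set of homotopy classes of continuous maps $X\to Y_k$. For an inverse sequence of sets $(S_n,r_n)$, $r_n:S_{n+1}\to S_n$, its tree is the geometric realization of the graph with vertices $\{v\}\sqcup\bigsqcup_nS_n$ and edges $\{x,r_n(x)\}$ ($x\in S_{n+1}$), $\{x,v\}$ ($x\in S_1$), edges of length 1, path metric, rooted at $v$. A geodesically complete branch is an isometric embedding $F:[0,\infty)\to T_{X,Y}$ with $F(0)=v$. An approximative map of $X$ towards $Y$ is a sequence of continuous maps $f_k:X\to Y_k$ such that for every $N$ there is $m(N)$ with $p_t\circ f_{t+1}\simeq f_t$ in $Y_N$ for all $t\ge m(N)$; two approximative maps $\{f_k\},\{g_k\}$ are homotopic if for every neighbourhood $V$ of $Y$ in $I^\infty$ there is $k_0$ with $f_k\simeq g_k$ in $V$ for all $k\ge k_0$. *)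

theory Defs
  imports "HOL-Analysis.Analysis" "HOL-Library.FuncSet"
begin

abbreviation RN :: "(nat \<Rightarrow> real) topology" where
  "RN \<equiv> powertop_real UNIV"

definition hilbert_cube_set :: "(nat \<Rightarrow> real) set" where
  "hilbert_cube_set = {x. \<forall>i. x i \<in> {0..1}}"

definition hilbert_cube :: "(nat \<Rightarrow> real) topology" where
  "hilbert_cube = subtopology RN hilbert_cube_set"

text \<open>Convex hull of a finite set of points of the vector space of real sequences,
  written out explicitly (the function type carries no real-vector instance).\<close>
definition seq_convex_hull :: "(nat \<Rightarrow> real) set \<Rightarrow> (nat \<Rightarrow> real) set" where
  "seq_convex_hull V = {(\<lambda>i. \<Sum>v\<in>V. u v * v i) | u.
      (\<forall>v\<in>V. 0 \<le> u v) \<and> (\<Sum>v\<in>V. u v) = 1}"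

definition compact_polyhedron :: "(nat \<Rightarrow> real) set \<Rightarrow> bool" where
  "compact_polyhedron P \<longleftrightarrow>
     (\<exists>\<F>. finite \<F> \<and> (\<forall>V\<in>\<F>. finite V) \<and> P = (\<Union>V\<in>\<F>. seq_convex_hull V))"

definition prism :: "'a topology \<Rightarrow> bool" where
  "prism T \<longleftrightarrow> (\<exists>P. compact_polyhedron P \<and>
      T homeomorphic_space prod_topology (subtopology RN P) hilbert_cube)"

definition hclass :: "'a topology \<Rightarrow> 'b topology \<Rightarrow> ('a \<Rightarrow> 'b) \<Rightarrow> ('a \<Rightarrow> 'b) set" where
  "hclass A B f = {g. homotopic_with (\<lambda>_. True) A B f g}"

definition hclasses :: "'a topology \<Rightarrow> 'b topology \<Rightarrow> ('a \<Rightarrow> 'b) set set" where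
  "hclasses A B = {hclass A B f | f. continuous_map A B f}"

text \<open>An inverse sequence of sets is given by \<open>S :: nat \<Rightarrow> 'b set\<close> and bonding maps
  \<open>r n : S (Suc n) \<rightarrow> S n\<close>. Level \<open>S n\<close> consists of the vertices at depth \<open>n+1\<close>;
  the root \<open>v\<close> has depth 0 and is joined to every vertex of \<open>S 0\<close>.

  A point of the geometric realization is either the root, or a point
  \<open>Pt n x t\<close> with \<open>x \<in> S n\<close>, \<open>0 \<le> t < 1\<close>: the point at distance \<open>t\<close> from the vertex
  \<open>x\<close> on the (unit length) edge from \<open>x\<close> to its parent.\<close>
datatype 'b tree_pt = Root | Pt nat 'b real

definition tree_points :: "(nat \<Rightarrow> 'b set) \<Rightarrow> 'b tree_pt set" where
  "tree_points S = insert Root {Pt n x t | n x t. x \<in> S n \<and> 0 \<le> t \<and> t < 1}"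

fun anc :: "(nat \<Rightarrow> 'b \<Rightarrow> 'b) \<Rightarrow> nat \<Rightarrow> nat \<Rightarrow> 'b \<Rightarrow> 'b" where
  "anc r 0 k x = x"
| "anc r (Suc n) k x = (if Suc n \<le> k then x else anc r n k (r n x))"

fun tree_height :: "'b tree_pt \<Rightarrow> real" where
  "tree_height Root = 0"
| "tree_height (Pt n x t) = real n + 1 - t"

text \<open>Depth of the deepest common ancestor vertex (the root having depth 0).\<close>
fun tree_meet_depth :: "(nat \<Rightarrow> 'b \<Rightarrow> 'b) \<Rightarrow> 'b tree_pt \<Rightarrow> 'b tree_pt \<Rightarrow> nat" where
  "tree_meet_depth r (Pt n x t) (Pt m y s) =
     Max (insert 0 {Suc k | k. k \<le> min n m \<and> anc r n k x = anc r m k y})"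
| "tree_meet_depth r _ _ = 0"

text \<open>The path metric of the tree with unit edge lengths:
  \<open>d(p,q) = h(p) + h(q) - 2 h(p \<and> q)\<close>, where \<open>p \<and> q\<close> is the meeting point of the geodesics
  from the root to \<open>p\<close> and to \<open>q\<close>.\<close>
definition tree_dist :: "(nat \<Rightarrow> 'b \<Rightarrow> 'b) \<Rightarrow> 'b tree_pt \<Rightarrow> 'b tree_pt \<Rightarrow> real" where
  "tree_dist r p q = tree_height p + tree_height q
      - 2 * min (real (tree_meet_depth r p q)) (min (tree_height p) (tree_height q))"

text \<open>Geodesically complete branches: isometric embeddings \<open>[0,\<infinity>) \<rightarrow> T\<close> sending 0 to
  the root (taken extensional, i.e. undefined outside \<open>[0,\<infinity>)\<close>).\<close>
definition geodesic_branches ::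
    "(nat \<Rightarrow> 'b set) \<Rightarrow> (nat \<Rightarrow> 'b \<Rightarrow> 'b) \<Rightarrow> (real \<Rightarrow> 'b tree_pt) set" where
  "geodesic_branches S r = {F. F \<in> {0..} \<rightarrow>\<^sub>E tree_points S \<and> F 0 = Root \<and>
      (\<forall>a\<in>{0..}. \<forall>b\<in>{0..}. tree_dist r (F a) (F b) = \<bar>a - b\<bar>)}"

text \<open>\<open>p\<^sub>k\<^sup>*\<close>: induced by the inclusion \<open>Y (Suc k) \<subseteq> Y k\<close>.\<close>
definition induced_incl ::
    "'a topology \<Rightarrow> (nat \<Rightarrow> (nat \<Rightarrow> real) set) \<Rightarrow> nat
       \<Rightarrow> ('a \<Rightarrow> nat \<Rightarrow> real) set \<Rightarrow> ('a \<Rightarrow> nat \<Rightarrow> real) set" where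
  "induced_incl TX Y k C = hclass TX (subtopology hilbert_cube (Y k)) (SOME g. g \<in> C)"

definition approximative_map ::
    "'a topology \<Rightarrow> (nat \<Rightarrow> (nat \<Rightarrow> real) set) \<Rightarrow> (nat \<Rightarrow> 'a \<Rightarrow> nat \<Rightarrow> real) \<Rightarrow> bool" where
  "approximative_map TX Y f \<longleftrightarrow>
     (\<forall>k. continuous_map TX (subtopology hilbert_cube (Y k)) (f k)) \<and>
     (\<forall>N. \<exists>m. \<forall>t\<ge>m. homotopic_with (\<lambda>_. True) TX (subtopology hilbert_cube (Y N))
                       (f (Suc t)) (f t))"

definition approx_homotopic ::
    "'a topology \<Rightarrow> (nat \<Rightarrow> real) set
       \<Rightarrow> (nat \<Rightarrow> 'a \<Rightarrow> nat \<Rightarrow> real) \<Rightarrow> (nat \<Rightarrow> 'a \<Rightarrow> nat \<Rightarrow> real) \<Rightarrow> bool" where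
  "approx_homotopic TX Y0 f g \<longleftrightarrow>
     (\<forall>V. V \<subseteq> hilbert_cube_set \<and> Y0 \<subseteq> hilbert_cube interior_of V \<longrightarrow>
        (\<exists>k0. \<forall>k\<ge>k0. homotopic_with (\<lambda>_. True) TX (subtopology hilbert_cube V) (f k) (g k)))"

end

theory Submission
  imports Defs
begin

text \<open>An approximative map \<open>f\<close> is eventually constant up to homotopy in each \<open>Y\<^sub>N\<close>:
  for large \<open>t\<close> the classes \<open>[f\<^sub>t] \<in> [X, Y\<^sub>N]\<close> agree. These stable classes form a thread
  of the inverse sequence \<open>([X, Y\<^sub>k], p\<^sub>k\<^sup>*)\<close>, every thread arises this way (pick a
  representative of each class), and two approximative maps are homotopic iff their threads
  coincide, because by compactness every neighbourhood of \<open>Y\<close> contains some \<open>Y\<^sub>N\<close>.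
  Threads in turn are exactly the geodesic rays from the root of the tree: the ray of a
  thread \<open>c\<close> passes through the vertex \<open>c\<^sub>n\<close> at distance \<open>n + 1\<close> from the root.\<close>

section \<open>Threads of an inverse sequence and geodesic branches\<close>

definition threads :: "(nat \<Rightarrow> 'b set) \<Rightarrow> (nat \<Rightarrow> 'b \<Rightarrow> 'b) \<Rightarrow> (nat \<Rightarrow> 'b) set" where
  "threads S r = {c. \<forall>n. c n \<in> S n \<and> r n (c (Suc n)) = c n}"

text \<open>The point at distance \<open>a > 0\<close> from the root lies on the edge from the vertex
  \<open>c n\<close>, at height \<open>n + 1 = \<lceil>a\<rceil>\<close>, to its parent.\<close>
definition branch_of_thread :: "(nat \<Rightarrow> 'b) \<Rightarrow> real \<Rightarrow> 'b tree_pt" where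
  "branch_of_thread c a =
     (if a < 0 then undefined else if a = 0 then Root
      else Pt (nat \<lceil>a\<rceil> - 1) (c (nat \<lceil>a\<rceil> - 1)) (real (nat \<lceil>a\<rceil>) - a))"

definition thread_of_branch :: "(real \<Rightarrow> 'b tree_pt) \<Rightarrow> nat \<Rightarrow> 'b" where
  "thread_of_branch F n = (case F (real n + 1) of Pt _ y _ \<Rightarrow> y | Root \<Rightarrow> undefined)"

lemma anc_same_level [simp]: "anc r n n x = x"
  by (cases n) auto

lemma anc_thread:
  assumes "c \<in> threads S r" "k \<le> n"
  shows "anc r n k (c n) = c k"
  using assms(2)
proof (induction n)
  case (Suc n)
  with assms(1) show ?case
    by (cases "Suc n \<le> k") (auto simp: threads_def)
qed simp

lemma tree_meet_depth_thread:
  assumes "c \<in> threads S r"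
  shows "tree_meet_depth r (Pt n (c n) t) (Pt m (c m) s) = Suc (min n m)"
proof -
  have "{Suc k |k. k \<le> min n m \<and> anc r n k (c n) = anc r m k (c m)} = Suc ` {..min n m}"
    using anc_thread[OF assms] by auto
  moreover have "Max {..Suc (min n m)} = Suc (min n m)"
    by (rule Max_eqI) auto
  ultimately show ?thesis
    by (simp flip: atMost_Suc_eq_insert_0)
qed

lemma anc_eq_if_tree_meet_depth_gt:
  assumes "n \<le> m" "real n < real (tree_meet_depth r (Pt n x t) (Pt m y s))"
  shows "anc r m n y = x"
proof -
  let ?B = "{Suc k |k. k \<le> min n m \<and> anc r n k x = anc r m k y}"
  have "finite (insert 0 ?B)"
    by (rule finite_subset[of _ "{..Suc (min n m)}"]) auto
  moreover have "n < Max (insert 0 ?B)"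
    using assms(2) by simp
  ultimately obtain k where "k \<le> min n m" "anc r n k x = anc r m k y" "n < Suc k"
    by (auto simp: Max_gr_iff)
  then show ?thesis
    by (metis anc_same_level le_antisym less_Suc_eq_le min.bounded_iff)
qed

lemma tree_dist_Root_left: "tree_height q \<ge> 0 \<Longrightarrow> tree_dist r Root q = tree_height q"
  by (simp add: tree_dist_def)

lemma tree_dist_Root_right: "tree_height p \<ge> 0 \<Longrightarrow> tree_dist r p Root = tree_height p"
  by (cases p) (auto simp: tree_dist_def)

lemma tree_height_nonneg: "q \<in> tree_points S \<Longrightarrow> tree_height q \<ge> 0"
  by (auto simp: tree_points_def)

lemma branch_of_thread_zero [simp]: "branch_of_thread c 0 = Root"
  by (simp add: branch_of_thread_def)

lemma branch_of_thread_extensional: "branch_of_thread c \<in> extensional {0..}"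
  by (simp add: branch_of_thread_def extensional_def)

lemma branch_of_thread_pos:
  assumes "a > 0"
  obtains n where "real n < a" "a \<le> real n + 1"
    "branch_of_thread c a = Pt n (c n) (real n + 1 - a)"
proof
  define n where "n = nat \<lceil>a\<rceil> - 1"
  have "\<lceil>a\<rceil> \<ge> 1"
    using assms by (simp add: one_le_ceiling)
  then have n: "nat \<lceil>a\<rceil> = Suc n"
    by (simp add: n_def)
  moreover have "real (nat \<lceil>a\<rceil>) = real_of_int \<lceil>a\<rceil>"
    using \<open>\<lceil>a\<rceil> \<ge> 1\<close> by simp
  ultimately have "real n + 1 = real_of_int \<lceil>a\<rceil>"
    by simp
  then show "real n < a" "a \<le> real n + 1"
    using ceiling_correct[of a] le_of_int_ceiling[of a] by linarith+
  show "branch_of_thread c a = Pt n (c n) (real n + 1 - a)"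
    using assms by (simp add: branch_of_thread_def n)
qed

lemma branch_of_thread_geodesic:
  assumes c: "c \<in> threads S r"
  shows "branch_of_thread c \<in> geodesic_branches S r"
proof -
  have at_pos: "\<exists>n. real n < a \<and> a \<le> real n + 1 \<and> branch_of_thread c a = Pt n (c n) (real n + 1 - a)"
    if "a > 0" for a
    by (metis branch_of_thread_pos that)
  have points: "branch_of_thread c a \<in> tree_points S" if "a \<ge> 0" for a
    using that at_pos[of a] c
    by (cases "a = 0") (auto simp: tree_points_def threads_def)
  have height: "tree_height (branch_of_thread c a) = a" if "a \<ge> 0" for a
    using that at_pos[of a] by (cases "a = 0") auto
  have dist_pos: "tree_dist r (branch_of_thread c a) (branch_of_thread c b) = \<bar>a - b\<bar>"
    if "a > 0" "b > 0" for a b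
  proof -
    obtain n where "real n < a" "a \<le> real n + 1" "branch_of_thread c a = Pt n (c n) (real n + 1 - a)"
      using branch_of_thread_pos \<open>a > 0\<close> .
    moreover obtain m where "real m < b" "b \<le> real m + 1" "branch_of_thread c b = Pt m (c m) (real m + 1 - b)"
      using branch_of_thread_pos \<open>b > 0\<close> .
    ultimately show ?thesis
      using tree_meet_depth_thread[OF c] by (simp add: tree_dist_def)
  qed
  have dist_root: "tree_dist r (branch_of_thread c 0) (branch_of_thread c b) = b"
    "tree_dist r (branch_of_thread c b) (branch_of_thread c 0) = b" if "b \<ge> 0" for b
    using tree_dist_Root_left[OF tree_height_nonneg[OF points[OF that]]]
      tree_dist_Root_right[OF tree_height_nonneg[OF points[OF that]]] height[OF that]
    by simp_all
  have "tree_dist r (branch_of_thread c a) (branch_of_thread c b) = \<bar>a - b\<bar>"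
    if "a \<ge> 0" "b \<ge> 0" for a b
    using that dist_pos[of a b] dist_root[of a] dist_root[of b]
    by (cases "a = 0"; cases "b = 0") simp_all
  then show ?thesis
    using points branch_of_thread_extensional by (simp add: geodesic_branches_def PiE_iff)
qed

lemma thread_of_branch_of_thread: "thread_of_branch (branch_of_thread c) = c"
proof
  fix n
  obtain m where "real m < real n + 1" "real n + 1 \<le> real m + 1"
    "branch_of_thread c (real n + 1) = Pt m (c m) (real m + 1 - (real n + 1))"
    using branch_of_thread_pos[of "real n + 1"] by auto
  moreover from calculation have "m = n"
    by linarith
  ultimately show "thread_of_branch (branch_of_thread c) n = c n"
    by (simp add: thread_of_branch_def)
qed

lemma geodesic_branch_props:
  assumes "F \<in> geodesic_branches S r"
  shows "F 0 = Root" and "a \<ge> 0 \<Longrightarrow> F a \<in> tree_points S" and "a < 0 \<Longrightarrow> F a = undefined"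
    and "a \<ge> 0 \<Longrightarrow> b \<ge> 0 \<Longrightarrow> tree_dist r (F a) (F b) = \<bar>a - b\<bar>"
  using assms by (auto simp: geodesic_branches_def PiE_def extensional_def)

lemma geodesic_branch_on_edge:
  assumes F: "F \<in> geodesic_branches S r" and "a > 0"
  obtains n y where "F a = Pt n y (real n + 1 - a)" "y \<in> S n" "real n < a" "a \<le> real n + 1"
proof -
  have Fa: "F a \<in> tree_points S"
    using geodesic_branch_props(2)[OF F] \<open>a > 0\<close> by simp
  then have "tree_height (F a) = a"
    using geodesic_branch_props(4)[OF F, of 0 a] geodesic_branch_props(1)[OF F] \<open>a > 0\<close>
      tree_dist_Root_left[OF tree_height_nonneg[OF Fa]]
    by simp
  with Fa show ?thesis
    using that \<open>a > 0\<close> by (auto simp: tree_points_def)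
qed

lemma geodesic_branch_vertex:
  assumes F: "F \<in> geodesic_branches S r"
  shows "F (real n + 1) = Pt n (thread_of_branch F n) 0" and "thread_of_branch F n \<in> S n"
proof -
  obtain m y where "F (real n + 1) = Pt m y (real m + 1 - (real n + 1))" "y \<in> S m"
    "real m < real n + 1" "real n + 1 \<le> real m + 1"
    using geodesic_branch_on_edge[OF F, of "real n + 1"] by auto
  moreover from calculation have "m = n"
    by linarith
  ultimately show "F (real n + 1) = Pt n (thread_of_branch F n) 0" "thread_of_branch F n \<in> S n"
    by (simp_all add: thread_of_branch_def)
qed

text \<open>Consecutive vertices of a geodesic branch are at distance 1, so they are joined by an edge.\<close>
lemma thread_of_branch_thread:
  assumes F: "F \<in> geodesic_branches S r"
  shows "thread_of_branch F \<in> threads S r"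
  unfolding threads_def
proof (intro CollectI allI conjI)
  fix n
  show "thread_of_branch F n \<in> S n"
    by (rule geodesic_branch_vertex(2)[OF F])
  have "tree_dist r (F (real n + 1)) (F (real (Suc n) + 1)) = 1"
    using geodesic_branch_props(4)[OF F, of "real n + 1" "real (Suc n) + 1"] by simp
  then have "real n < real (tree_meet_depth r (Pt n (thread_of_branch F n) 0)
                                            (Pt (Suc n) (thread_of_branch F (Suc n)) 0))"
    using geodesic_branch_vertex(1)[OF F, of n] geodesic_branch_vertex(1)[OF F, of "Suc n"]
    by (simp add: tree_dist_def)
  then show "r n (thread_of_branch F (Suc n)) = thread_of_branch F n"
    using anc_eq_if_tree_meet_depth_gt[of n "Suc n"] by simp
qed

text \<open>The point \<open>F a\<close> with \<open>n < a \<le> n + 1\<close> is at distance \<open>n + 1 - a\<close> from the vertex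
  \<open>F (n + 1)\<close>, which forces it onto the edge below that vertex.\<close>
lemma branch_of_thread_of_branch:
  assumes F: "F \<in> geodesic_branches S r"
  shows "branch_of_thread (thread_of_branch F) = F"
proof
  fix a :: real
  consider "a < 0" | "a = 0" | "a > 0"
    by linarith
  then show "branch_of_thread (thread_of_branch F) a = F a"
  proof cases
    case 1
    then show ?thesis
      using geodesic_branch_props(3)[OF F] by (simp add: branch_of_thread_def)
  next
    case 2
    then show ?thesis
      using geodesic_branch_props(1)[OF F] by simp
  next
    case 3
    obtain n y where Fa: "F a = Pt n y (real n + 1 - a)" "real n < a" "a \<le> real n + 1"
      using geodesic_branch_on_edge[OF F 3] by blast
    have "tree_dist r (F a) (F (real n + 1)) = real n + 1 - a"
      using geodesic_branch_props(4)[OF F, of a "real n + 1"] 3 Fa by simp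
    then have "real n < real (tree_meet_depth r (Pt n y (real n + 1 - a)) (Pt n (thread_of_branch F n) 0))"
      using geodesic_branch_vertex(1)[OF F, of n] Fa by (simp add: tree_dist_def)
    then have "thread_of_branch F n = y"
      using anc_eq_if_tree_meet_depth_gt[of n n] by simp
    moreover obtain m where "real m < a" "a \<le> real m + 1"
      "branch_of_thread (thread_of_branch F) a = Pt m (thread_of_branch F m) (real m + 1 - a)"
      using branch_of_thread_pos[OF 3] .
    moreover from calculation have "m = n"
      using Fa by linarith
    ultimately show ?thesis
      using Fa by simp
  qed
qed

lemma bij_betw_threads_geodesic_branches:
  "bij_betw branch_of_thread (threads S r) (geodesic_branches S r)"
  by (rule bij_betw_byWitness[where f' = thread_of_branch])
    (auto simp: thread_of_branch_of_thread thread_of_branch_thread branch_of_thread_of_branch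
      branch_of_thread_geodesic)

lemma bij_betw_quotient_fibres:
  assumes "\<theta> ` A = B"
  shows "bij_betw (\<lambda>C. \<theta> (SOME x. x \<in> C)) (A // {(x, y). x \<in> A \<and> y \<in> A \<and> \<theta> x = \<theta> y}) B"
proof -
  let ?R = "{(x, y). x \<in> A \<and> y \<in> A \<and> \<theta> x = \<theta> y}"
  let ?rep = "\<lambda>C. \<theta> (SOME x. x \<in> C)"
  have fibre: "?R `` {x} = {y \<in> A. \<theta> y = \<theta> x}" if "x \<in> A" for x
    using that by auto
  have rep: "?rep (?R `` {x}) = \<theta> x" if "x \<in> A" for x
  proof -
    have "x \<in> ?R `` {x}"
      using that by simp
    then have "(SOME y. y \<in> ?R `` {x}) \<in> ?R `` {x}"
      by (rule someI)
    then show ?thesis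
      unfolding fibre[OF that] by simp
  qed
  have "inj_on ?rep (A // ?R)"
  proof (rule inj_onI)
    fix C D
    assume "C \<in> A // ?R" "D \<in> A // ?R" and eq: "?rep C = ?rep D"
    then obtain x y where x: "x \<in> A" "C = ?R `` {x}" and y: "y \<in> A" "D = ?R `` {y}"
      unfolding quotient_def by blast
    then have "\<theta> x = \<theta> y"
      using eq rep[OF x(1)] rep[OF y(1)] by simp
    then show "C = D"
      unfolding x(2) y(2) fibre[OF x(1)] fibre[OF y(1)] by simp
  qed
  moreover have "?rep ` (A // ?R) = B"
  proof -
    have "?rep ` (A // ?R) = (\<lambda>x. ?rep (?R `` {x})) ` A"
      unfolding quotient_def by blast
    also have "\<dots> = \<theta> ` A"
      using rep by (rule image_cong[OF refl])
    finally show ?thesis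
      using assms by simp
  qed
  ultimately show ?thesis
    by (simp add: bij_betw_def)
qed

section \<open>Stable homotopy classes of approximative maps\<close>

lemma continuous_map_in_subtopology_mono:
  "continuous_map X (subtopology Z S) f \<Longrightarrow> S \<subseteq> T \<Longrightarrow> continuous_map X (subtopology Z T) f"
  by (auto simp: continuous_map_in_subtopology)

lemma homotopic_with_in_subtopology_mono:
  assumes "homotopic_with P X (subtopology Z S) f g" "S \<subseteq> T"
  shows "homotopic_with P X (subtopology Z T) f g"
  using assms continuous_map_in_subtopology_mono unfolding homotopic_with_def by metis

lemma hclass_eq_iff:
  assumes "continuous_map A B f"
  shows "hclass A B f = hclass A B g \<longleftrightarrow> homotopic_with (\<lambda>_. True) A B f g"
proof
  assume "hclass A B f = hclass A B g"
  moreover have "f \<in> hclass A B f"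
    using assms by (simp add: hclass_def)
  ultimately show "homotopic_with (\<lambda>_. True) A B f g"
    by (simp add: hclass_def homotopic_with_sym)
next
  assume fg: "homotopic_with (\<lambda>_. True) A B f g"
  then have gf: "homotopic_with (\<lambda>_. True) A B g f"
    by (rule homotopic_with_symD)
  show "hclass A B f = hclass A B g"
    unfolding hclass_def
    by (blast intro: homotopic_with_trans[OF fg] homotopic_with_trans[OF gf])
qed

lemma Hausdorff_space_hilbert_cube: "Hausdorff_space hilbert_cube"
  unfolding hilbert_cube_def
  by (metis Hausdorff_space_subtopology Hausdorff_space_euclidean Hausdorff_space_product_topology)

lemma compactin_nest_subset_open:
  assumes "Hausdorff_space X" "\<And>k. compactin X (K k)" "decseq K"
    and "openin X U" "(\<Inter>k. K k) \<subseteq> U"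
  shows "\<exists>N. K N \<subseteq> U"
proof (rule ccontr)
  assume "\<nexists>N. K N \<subseteq> U"
  then have nonempty: "K n - U \<noteq> {}" for n
    by blast
  have "closedin (subtopology X (K 0)) (K n - U)" for n
  proof -
    have "closedin X (K n - U)"
      using assms compactin_imp_closedin by blast
    moreover have "K n \<subseteq> K 0"
      using \<open>decseq K\<close> by (simp add: decseq_def)
    ultimately show ?thesis
      by (metis Diff_subset closedin_subset_topspace subset_trans)
  qed
  moreover have "compact_space (subtopology X (K 0))"
    using assms(2) compact_space_subtopology by blast
  moreover have "decseq (\<lambda>n. K n - U)"
    using \<open>decseq K\<close> by (auto simp: decseq_def)
  ultimately have "(\<Inter>n. K n - U) \<noteq> {}"
    using compact_space_imp_nest[of _ "\<lambda>n. K n - U"] nonempty by blast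
  then show False
    using assms(5) by blast
qed

locale decreasing_subspaces =
  fixes TX :: "'a topology" and Y :: "nat \<Rightarrow> (nat \<Rightarrow> real) set"
  assumes Y_Suc_subset: "Y (Suc k) \<subseteq> Y k"
begin

abbreviation homotopic_in :: "nat \<Rightarrow> ('a \<Rightarrow> nat \<Rightarrow> real) \<Rightarrow> ('a \<Rightarrow> nat \<Rightarrow> real) \<Rightarrow> bool" where
  "homotopic_in k f g \<equiv> homotopic_with (\<lambda>_. True) TX (subtopology hilbert_cube (Y k)) f g"

abbreviation continuous_in :: "nat \<Rightarrow> ('a \<Rightarrow> nat \<Rightarrow> real) \<Rightarrow> bool" where
  "continuous_in k f \<equiv> continuous_map TX (subtopology hilbert_cube (Y k)) f"

abbreviation class_in :: "nat \<Rightarrow> ('a \<Rightarrow> nat \<Rightarrow> real) \<Rightarrow> ('a \<Rightarrow> nat \<Rightarrow> real) set" where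
  "class_in k f \<equiv> hclass TX (subtopology hilbert_cube (Y k)) f"

abbreviation class_threads :: "(nat \<Rightarrow> ('a \<Rightarrow> nat \<Rightarrow> real) set) set" where
  "class_threads \<equiv> threads (\<lambda>k. hclasses TX (subtopology hilbert_cube (Y k))) (induced_incl TX Y)"

lemma Y_antimono: "m \<le> n \<Longrightarrow> Y n \<subseteq> Y m"
  by (rule lift_Suc_antimono_le[of Y, OF Y_Suc_subset])

lemma homotopic_in_mono: "homotopic_in n f g \<Longrightarrow> m \<le> n \<Longrightarrow> homotopic_in m f g"
  by (erule homotopic_with_in_subtopology_mono) (rule Y_antimono)

lemma continuous_in_mono: "continuous_in n f \<Longrightarrow> m \<le> n \<Longrightarrow> continuous_in m f"
  by (erule continuous_map_in_subtopology_mono) (rule Y_antimono)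

lemma mem_class_in: "continuous_in k f \<Longrightarrow> f \<in> class_in k f"
  by (simp add: hclass_def)

text \<open>The bonding map \<open>p\<^sub>n\<^sup>*\<close> sends the class of \<open>g\<close> in \<open>Y (n + 1)\<close> to the class of the same
  map \<open>g\<close> in \<open>Y n\<close>, whichever representative \<open>induced_incl\<close> happens to choose.\<close>
lemma induced_incl_class_in:
  assumes "continuous_in (Suc n) g"
  shows "induced_incl TX Y n (class_in (Suc n) g) = class_in n g"
proof -
  let ?h = "SOME h. h \<in> class_in (Suc n) g"
  have "?h \<in> class_in (Suc n) g"
    using someI[of "\<lambda>h. h \<in> class_in (Suc n) g", OF mem_class_in[OF assms]] .
  then have "homotopic_in n g ?h"
    using homotopic_in_mono by (simp add: hclass_def)
  moreover have "continuous_in n g"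
    using continuous_in_mono[OF assms] by simp
  ultimately have "class_in n g = class_in n ?h"
    by (simp add: hclass_eq_iff)
  then show ?thesis
    by (simp add: induced_incl_def)
qed

lemma class_in_eq_if_homotopic_steps:
  assumes "\<And>t. m \<le> t \<Longrightarrow> homotopic_in N (f (Suc t)) (f t)" "m \<le> t"
  shows "class_in N (f t) = class_in N (f m)"
  using assms(2)
proof (induction t rule: dec_induct)
  case (step t)
  have "homotopic_in N (f (Suc t)) (f t)"
    using assms(1) step(1) .
  moreover from this have "continuous_in N (f (Suc t))"
    by (simp add: homotopic_with_imp_continuous_maps)
  ultimately have "class_in N (f (Suc t)) = class_in N (f t)"
    by (simp add: hclass_eq_iff)
  with step.IH show ?case
    by simp
qed simp

lemma approximative_map_continuous_in:
  "approximative_map TX Y f \<Longrightarrow> N \<le> t \<Longrightarrow> continuous_in N (f t)"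
  using continuous_in_mono by (auto simp: approximative_map_def)

text \<open>\<open>stable_index f N\<close> is an index from which on consecutive maps are homotopic in \<open>Y N\<close>
  (one exists by approximativity); taking it \<open>\<ge> N\<close> makes these maps land in \<open>Y N\<close>.\<close>
definition stable_index :: "(nat \<Rightarrow> 'a \<Rightarrow> nat \<Rightarrow> real) \<Rightarrow> nat \<Rightarrow> nat" where
  "stable_index f N = max N (SOME m. \<forall>t\<ge>m. homotopic_in N (f (Suc t)) (f t))"

definition stable_class :: "(nat \<Rightarrow> 'a \<Rightarrow> nat \<Rightarrow> real) \<Rightarrow> nat \<Rightarrow> ('a \<Rightarrow> nat \<Rightarrow> real) set" where
  "stable_class f N = class_in N (f (stable_index f N))"

lemma stable_index_ge: "N \<le> stable_index f N"
  by (simp add: stable_index_def)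

lemma homotopic_in_after_stable_index:
  assumes "approximative_map TX Y f" "stable_index f N \<le> t"
  shows "homotopic_in N (f (Suc t)) (f t)"
proof -
  have "\<exists>m. \<forall>t\<ge>m. homotopic_in N (f (Suc t)) (f t)"
    using assms(1) by (simp add: approximative_map_def)
  from someI_ex[OF this] show ?thesis
    using assms(2) by (simp add: stable_index_def)
qed

lemma class_in_eq_stable_class:
  assumes "approximative_map TX Y f" "stable_index f N \<le> t"
  shows "class_in N (f t) = stable_class f N"
  unfolding stable_class_def
  using class_in_eq_if_homotopic_steps[of "stable_index f N" N f t,
      OF homotopic_in_after_stable_index[OF assms(1)] assms(2)] .

lemma stable_class_thread:
  assumes f: "approximative_map TX Y f"
  shows "stable_class f \<in> class_threads"
  unfolding threads_def
proof (intro CollectI allI conjI)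
  fix n
  show "stable_class f n \<in> hclasses TX (subtopology hilbert_cube (Y n))"
    unfolding stable_class_def hclasses_def
    using approximative_map_continuous_in[OF f stable_index_ge] by auto
  define t where "t = max (stable_index f n) (stable_index f (Suc n))"
  have "induced_incl TX Y n (stable_class f (Suc n)) = induced_incl TX Y n (class_in (Suc n) (f t))"
    using class_in_eq_stable_class[OF f] by (simp add: t_def)
  also have "\<dots> = class_in n (f t)"
  proof -
    have "Suc n \<le> t"
      using stable_index_ge[of "Suc n" f] by (simp add: t_def)
    then show ?thesis
      by (rule induced_incl_class_in[OF approximative_map_continuous_in[OF f]])
  qed
  also have "\<dots> = stable_class f n"
    using class_in_eq_stable_class[OF f] by (simp add: t_def)
  finally show "induced_incl TX Y n (stable_class f (Suc n)) = stable_class f n" .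
qed

lemma thread_eq_stable_class:
  assumes c: "c \<in> class_threads"
  obtains f where "approximative_map TX Y f" "stable_class f = c"
proof -
  have "\<forall>n. \<exists>g. continuous_in n g \<and> c n = class_in n g"
    using c by (auto simp: threads_def hclasses_def)
  from choice[OF this] obtain f where "\<forall>n. continuous_in n (f n) \<and> c n = class_in n (f n)" ..
  then have f: "\<And>n. continuous_in n (f n)" "\<And>n. c n = class_in n (f n)"
    by simp_all
  have step_Suc: "homotopic_in t (f (Suc t)) (f t)" for t
  proof -
    have "class_in t (f (Suc t)) = induced_incl TX Y t (c (Suc t))"
      using induced_incl_class_in[OF f(1)] f(2) by simp
    also have "\<dots> = class_in t (f t)"
      using c f(2) by (simp add: threads_def)
    finally show ?thesis
      using hclass_eq_iff[OF continuous_in_mono[OF f(1) le_SucI[OF order_refl]]] by simp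
  qed
  have step: "homotopic_in N (f (Suc t)) (f t)" if "N \<le> t" for N t
    using homotopic_in_mono[OF step_Suc that] .
  then have approx: "approximative_map TX Y f"
    using f(1) by (auto simp: approximative_map_def)
  have "stable_class f N = c N" for N
    unfolding stable_class_def
    using class_in_eq_if_homotopic_steps[of N N f, OF step stable_index_ge] f(2) by simp
  then show ?thesis
    using that[OF approx] by (simp add: fun_eq_iff)
qed

lemma stable_class_image: "stable_class ` {f. approximative_map TX Y f} = class_threads"
proof
  show "stable_class ` {f. approximative_map TX Y f} \<subseteq> class_threads"
    using stable_class_thread by blast
  show "class_threads \<subseteq> stable_class ` {f. approximative_map TX Y f}"
  proof
    fix c
    assume "c \<in> class_threads"
    then obtain f where "approximative_map TX Y f" "stable_class f = c"
      by (rule thread_eq_stable_class)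
    then show "c \<in> stable_class ` {f. approximative_map TX Y f}"
      by blast
  qed
qed

lemma stable_class_eq_iff_eventually_homotopic_in:
  assumes f: "approximative_map TX Y f" and g: "approximative_map TX Y g"
  shows "stable_class f N = stable_class g N \<longleftrightarrow> (\<exists>k0. \<forall>k\<ge>k0. homotopic_in N (f k) (g k))"
proof
  assume fg: "stable_class f N = stable_class g N"
  have "homotopic_in N (f k) (g k)" if "max (stable_index f N) (stable_index g N) \<le> k" for k
  proof -
    have "continuous_in N (f k)"
      using approximative_map_continuous_in[OF f] stable_index_ge[of N f] that by simp
    moreover have "class_in N (f k) = class_in N (g k)"
      using class_in_eq_stable_class[OF f] class_in_eq_stable_class[OF g] fg that by simp
    ultimately show ?thesis
      by (simp add: hclass_eq_iff)
  qed
  then show "\<exists>k0. \<forall>k\<ge>k0. homotopic_in N (f k) (g k)"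
    by blast
next
  assume "\<exists>k0. \<forall>k\<ge>k0. homotopic_in N (f k) (g k)"
  then obtain k0 where k0: "\<And>k. k0 \<le> k \<Longrightarrow> homotopic_in N (f k) (g k)"
    by blast
  define k where "k = max k0 (max (stable_index f N) (stable_index g N))"
  have "continuous_in N (f k)"
    using approximative_map_continuous_in[OF f] stable_index_ge[of N f] by (simp add: k_def)
  moreover have "homotopic_in N (f k) (g k)"
    using k0 by (simp add: k_def)
  ultimately have "class_in N (f k) = class_in N (g k)"
    by (simp add: hclass_eq_iff)
  then show "stable_class f N = stable_class g N"
    using class_in_eq_stable_class[OF f] class_in_eq_stable_class[OF g] by (simp add: k_def)
qed

text \<open>Every \<open>Y N\<close> is an admissible neighbourhood \<open>V\<close> in the definition of homotopy of
  approximative maps, and conversely every admissible \<open>V\<close> contains some \<open>Y N\<close> by compactness.\<close>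
lemma approx_homotopic_iff_stable_class_eq:
  assumes Y_compact: "\<And>k. compactin hilbert_cube (Y k)"
    and Y_cube: "\<And>k. Y k \<subseteq> hilbert_cube_set"
    and Y_nbhd: "\<And>k. Y0 \<subseteq> hilbert_cube interior_of (Y k)"
    and Y_Inter: "(\<Inter>k. Y k) = Y0"
    and f: "approximative_map TX Y f" and g: "approximative_map TX Y g"
  shows "approx_homotopic TX Y0 f g \<longleftrightarrow> stable_class f = stable_class g"
proof
  assume fg: "approx_homotopic TX Y0 f g"
  have "\<exists>k0. \<forall>k\<ge>k0. homotopic_in N (f k) (g k)" for N
    using fg[unfolded approx_homotopic_def, rule_format, of "Y N"] Y_cube Y_nbhd by blast
  then show "stable_class f = stable_class g"
    using stable_class_eq_iff_eventually_homotopic_in[OF f g] by blast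
next
  assume fg: "stable_class f = stable_class g"
  show "approx_homotopic TX Y0 f g"
    unfolding approx_homotopic_def
  proof (intro allI impI)
    fix V
    assume "V \<subseteq> hilbert_cube_set \<and> Y0 \<subseteq> hilbert_cube interior_of V"
    moreover have "decseq Y"
      using Y_antimono by (simp add: decseq_def)
    ultimately obtain N where "Y N \<subseteq> hilbert_cube interior_of V"
      using compactin_nest_subset_open[where K = Y and U = "hilbert_cube interior_of V",
          OF Hausdorff_space_hilbert_cube Y_compact]
        Y_Inter by auto
    then have "Y N \<subseteq> V"
      using interior_of_subset[of hilbert_cube V] by blast
    moreover obtain k0 where "\<And>k. k0 \<le> k \<Longrightarrow> homotopic_in N (f k) (g k)"
      using fg[THEN fun_cong, of N] stable_class_eq_iff_eventually_homotopic_in[OF f g, of N] by blast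
    ultimately show "\<exists>k0. \<forall>k\<ge>k0. homotopic_with (\<lambda>_. True) TX (subtopology hilbert_cube V) (f k) (g k)"
      using homotopic_with_in_subtopology_mono by blast
  qed
qed

end

theorem proposition9p2:
  fixes X :: "'a::metric_space set"
    and Y0 :: "(nat \<Rightarrow> real) set"
    and Y :: "nat \<Rightarrow> (nat \<Rightarrow> real) set"
  assumes "compact X"
    and "Y0 \<subseteq> hilbert_cube_set" and "compactin hilbert_cube Y0"
    and "\<And>k. Y k \<subseteq> hilbert_cube_set"
    and "\<And>k. compactin hilbert_cube (Y k)"
    and "\<And>k. prism (subtopology hilbert_cube (Y k))"
    and "\<And>k. Y0 \<subseteq> hilbert_cube interior_of (Y k)"
    and "\<And>k. Y (Suc k) \<subseteq> Y k"
    and "(\<Inter>k. Y k) = Y0"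
  shows "\<exists>\<Phi>. bij_betw \<Phi>
      ({f. approximative_map (top_of_set X) Y f}
         // {(f, g). approximative_map (top_of_set X) Y f \<and> approximative_map (top_of_set X) Y g
                     \<and> approx_homotopic (top_of_set X) Y0 f g})
      (geodesic_branches (\<lambda>k. hclasses (top_of_set X) (subtopology hilbert_cube (Y k)))
                         (induced_incl (top_of_set X) Y))"
proof -
  interpret decreasing_subspaces "top_of_set X" Y
    by unfold_locales (fact assms(8))
  let ?A = "{f. approximative_map (top_of_set X) Y f}"
  have R: "{(f, g). approximative_map (top_of_set X) Y f \<and> approximative_map (top_of_set X) Y g
                 \<and> approx_homotopic (top_of_set X) Y0 f g}
        = {(f, g). f \<in> ?A \<and> g \<in> ?A \<and> stable_class f = stable_class g}"
    using approx_homotopic_iff_stable_class_eq[OF assms(5,4,7,9)] by auto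
  from bij_betw_quotient_fibres[OF stable_class_image] show ?thesis
    unfolding R
    using bij_betw_trans[OF _ bij_betw_threads_geodesic_branches] by blast
qed

end
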